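(* Let $M$ be a von Neumann algebra acting on a separable Hilbert space $\mathcal H$, let $\Omega\in\mathcal H$ be a separating vector for $M$, and let $T\in\mathcal B(\mathcal H)$ satisfy $\ker T=\{0\}$ and be such that the linear map $M\ni x\mapsto Tx\Omega\in\mathcal H$ is compact. Then $L(x):=\|Tx\Omega\|$ is a dual-Lip-norm on $M$, i.e. $(M,L)$ is a Lip-von Neumann algebra.
   Context: A dual-Lip-norm on a von Neumann algebra $M$ is a norm on $M$ (everywhere finite) which induces the $w^*$-topology on bounded subsets of $M$; a Lip-von Neumann algebra is a von Neumann algebra endowed with such a norm. A linear map between Banach spaces is compact if it maps the closed unit ball to a relatively norm-compact set. *)

theory Defs
  imports "HOL-Analysis.Analysis"
begin

text \<open>A complex Hilbert space is modelled as a real Hilbert space 'h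
(class real_inner + complete_space, the real inner product being the real part
of the complex one) together with a complex structure J (multiplication by i):
a real-linear isometry with J o J = -id.\<close>

definition complex_structure :: "('h::{real_inner,complete_space} \<Rightarrow>\<^sub>L 'h) \<Rightarrow> bool" where
  "complex_structure J \<longleftrightarrow>
     (\<forall>x. J (J x) = - x) \<and> (\<forall>x y. inner (J x) (J y) = inner x y)"

text \<open>Bounded complex-linear operators (elements of B(H)): bounded real-linear maps commuting with J.\<close>
definition bounded_op :: "('h::{real_inner,complete_space} \<Rightarrow>\<^sub>L 'h) \<Rightarrow> ('h \<Rightarrow>\<^sub>L 'h) \<Rightarrow> bool" where
  "bounded_op J x \<longleftrightarrow> J o\<^sub>L x = x o\<^sub>L J"

definition cscale_op :: "('h::{real_inner,complete_space} \<Rightarrow>\<^sub>L 'h) \<Rightarrow> complex \<Rightarrow> ('h \<Rightarrow>\<^sub>L 'h) \<Rightarrow> ('h \<Rightarrow>\<^sub>L 'h)" where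
  "cscale_op J c x = Re c *\<^sub>R x + Im c *\<^sub>R (J o\<^sub>L x)"

definition is_adjoint :: "('h::real_inner \<Rightarrow>\<^sub>L 'h) \<Rightarrow> ('h \<Rightarrow>\<^sub>L 'h) \<Rightarrow> bool" where
  "is_adjoint x y \<longleftrightarrow> (\<forall>u v. inner (x u) v = inner u (y v))"

definition commutant :: "('h::{real_inner,complete_space} \<Rightarrow>\<^sub>L 'h) \<Rightarrow> ('h \<Rightarrow>\<^sub>L 'h) set \<Rightarrow> ('h \<Rightarrow>\<^sub>L 'h) set" where
  "commutant J S = {y. bounded_op J y \<and> (\<forall>x\<in>S. x o\<^sub>L y = y o\<^sub>L x)}"

definition von_neumann_algebra :: "('h::{real_inner,complete_space} \<Rightarrow>\<^sub>L 'h) \<Rightarrow> ('h \<Rightarrow>\<^sub>L 'h) set \<Rightarrow> bool" where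
  "von_neumann_algebra J M \<longleftrightarrow>
     M \<subseteq> {x. bounded_op J x} \<and> (\<forall>x\<in>M. \<exists>y\<in>M. is_adjoint x y) \<and>
     commutant J (commutant J M) = M"

definition separating_vector :: "('h::{real_inner,complete_space} \<Rightarrow>\<^sub>L 'h) set \<Rightarrow> 'h \<Rightarrow> bool" where
  "separating_vector M \<Omega> \<longleftrightarrow> (\<forall>x\<in>M. blinfun_apply x \<Omega> = 0 \<longrightarrow> x = (0::'h \<Rightarrow>\<^sub>L 'h))"

text \<open>The sigma-weak (= w*) topology on B(H): the weak topology induced by the normal
functionals x \<mapsto> \<Sum>n <x \<xi>_n, \<eta>_n> with \<Sum>||\<xi>_n||^2, \<Sum>||\<eta>_n||^2 < \<infinity>.
(Real parts suffice: the imaginary part of such a functional is the real part of another one.)\<close>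
definition normal_functional :: "('h::{real_inner,complete_space} \<Rightarrow>\<^sub>L 'h) \<Rightarrow> ('h \<Rightarrow>\<^sub>L 'h \<Rightarrow> real) \<Rightarrow> bool" where
  "normal_functional J \<phi> \<longleftrightarrow> (\<exists>\<xi> \<eta> :: nat \<Rightarrow> 'h.
      summable (\<lambda>n. (norm (\<xi> n))\<^sup>2) \<and> summable (\<lambda>n. (norm (\<eta> n))\<^sup>2) \<and>
      \<phi> = (\<lambda>x. \<Sum>n. inner (x (\<xi> n)) (\<eta> n)))"

definition sigma_weak_topology :: "('h::{real_inner,complete_space} \<Rightarrow>\<^sub>L 'h) \<Rightarrow> ('h \<Rightarrow>\<^sub>L 'h) topology" where
  "sigma_weak_topology J = topology_generated_by
     {{x. \<phi> x \<in> U} | \<phi> U. normal_functional J \<phi> \<and> open U}"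

definition L_topology :: "('h::{real_inner,complete_space} \<Rightarrow>\<^sub>L 'h) set \<Rightarrow> (('h \<Rightarrow>\<^sub>L 'h) \<Rightarrow> real) \<Rightarrow> ('h \<Rightarrow>\<^sub>L 'h) topology" where
  "L_topology M L = topology_generated_by {{y. L (y - x) < r} | x r. x \<in> M}"

definition dual_Lip_norm :: "('h::{real_inner,complete_space} \<Rightarrow>\<^sub>L 'h) \<Rightarrow> ('h \<Rightarrow>\<^sub>L 'h) set \<Rightarrow> (('h \<Rightarrow>\<^sub>L 'h) \<Rightarrow> real) \<Rightarrow> bool" where
  "dual_Lip_norm J M L \<longleftrightarrow>
     (\<forall>x\<in>M. 0 \<le> L x) \<and> (\<forall>x\<in>M. L x = 0 \<longrightarrow> x = 0) \<and>
     (\<forall>x\<in>M. \<forall>y\<in>M. L (x + y) \<le> L x + L y) \<and>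
     (\<forall>x\<in>M. \<forall>c. L (cscale_op J c x) = cmod c * L x) \<and>
     (\<forall>B. B \<subseteq> M \<and> bounded B \<longrightarrow>
        subtopology (L_topology M L) B = subtopology (sigma_weak_topology J) B)"

end

(*
  L(x) = norm (T (x \<Omega>)) is a norm on M because T is injective and \<Omega> is separating.
  L-balls are sigma-weak neighbourhoods: x \<mapsto> T (x \<Omega>) is continuous from the sigma-weak
  topology to the weak topology of H, and its values on B - B lie in a norm-compact set, on which
  the weak and the norm topology coincide.
  Sigma-weak neighbourhoods contain L-balls: since H is separable, bounded sequences in M have
  weak-operator convergent subsequences, whose limits stay in M (bicommutant) and along which normal
  functionals converge. If L (y n - x0) \<rightarrow> 0, such a limit z satisfies T (z \<Omega>) = T (x0 \<Omega>),
  hence z = x0.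
*)

theory Submission
  imports Defs
begin

lemma Cauchy_if_dist_sq_le_null:
  fixes s :: "nat \<Rightarrow> 'a::metric_space"
  assumes "\<And>m n. (dist (s m) (s n))\<^sup>2 \<le> b m + b n" and "b \<longlonglongrightarrow> 0"
  shows "Cauchy s"
proof (rule metric_CauchyI)
  fix e :: real assume "e > 0"
  hence "\<forall>\<^sub>F n in sequentially. b n < e\<^sup>2 / 2"
    using assms(2) by (intro order_tendstoD) auto
  then obtain N where N: "\<And>n. n \<ge> N \<Longrightarrow> b n < e\<^sup>2 / 2" by (auto simp: eventually_sequentially)
  have "dist (s m) (s n) < e" if "m \<ge> N" "n \<ge> N" for m n
  proof (rule power_less_imp_less_base)
    show "(dist (s m) (s n))\<^sup>2 < e\<^sup>2" using assms(1)[of m n] N[OF \<open>m \<ge> N\<close>] N[OF \<open>n \<ge> N\<close>] by linarith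
  qed (use \<open>e > 0\<close> in simp)
  thus "\<exists>N. \<forall>m\<ge>N. \<forall>n\<ge>N. dist (s m) (s n) < e" by blast
qed

lemma convergent_if_convergent_on_dense_equi_lipschitz:
  fixes g :: "nat \<Rightarrow> 'a::metric_space \<Rightarrow> real"
  assumes dense: "closure D = UNIV"
    and lip: "\<And>n u v. \<bar>g n u - g n v\<bar> \<le> K * dist u v"
    and conv: "\<And>u. u \<in> D \<Longrightarrow> convergent (\<lambda>n. g n u)"
  shows "convergent (\<lambda>n. g n x)"
proof -
  have "Cauchy (\<lambda>n. g n x)"
  proof (rule metric_CauchyI)
    fix e :: real assume "e > 0"
    hence "e / (3 * (\<bar>K\<bar> + 1)) > 0" by simp
    then obtain u where "u \<in> D" "dist u x < e / (3 * (\<bar>K\<bar> + 1))"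
      using dense by (metis UNIV_I closure_approachable)
    hence near: "\<bar>g n x - g n u\<bar> < e / 3" for n
    proof -
      have "K * dist x u \<le> (\<bar>K\<bar> + 1) * dist u x" by (simp add: dist_commute mult_right_mono)
      also have "\<dots> < (\<bar>K\<bar> + 1) * (e / (3 * (\<bar>K\<bar> + 1)))"
        using \<open>dist u x < _\<close> by (intro mult_strict_left_mono) auto
      also have "\<dots> = e / 3" by (simp add: field_simps)
      finally show ?thesis using lip[of n x u] by linarith
    qed
    obtain N where N: "\<And>m n. m \<ge> N \<Longrightarrow> n \<ge> N \<Longrightarrow> dist (g m u) (g n u) < e / 3"
      using conv[OF \<open>u \<in> D\<close>] \<open>e > 0\<close> unfolding Cauchy_convergent_iff[symmetric]
      by (metis metric_CauchyD zero_less_divide_iff zero_less_numeral)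
    have "dist (g m x) (g n x) < e" if "m \<ge> N" "n \<ge> N" for m n
      using N[OF that] near[of m] near[of n] unfolding dist_real_def by linarith
    thus "\<exists>N. \<forall>m\<ge>N. \<forall>n\<ge>N. dist (g m x) (g n x) < e" by blast
  qed
  thus ?thesis by (simp add: Cauchy_convergent_iff)
qed

lemma bounded_seq_has_pointwise_convergent_subseq:
  fixes f :: "nat \<Rightarrow> 'i::countable \<Rightarrow> real"
  assumes "\<And>n i. \<bar>f n i\<bar> \<le> b i"
  obtains r l where "strict_mono r" "\<And>i. (\<lambda>n. f (r n) i) \<longlonglongrightarrow> l i"
proof -
  \<comment> \<open>Tychonoff: a product of intervals is compact in the metrizable space of functions on a countable set\<close>
  have "compact (Pi\<^sub>E UNIV (\<lambda>i. {- b i..b i}))"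
    using compactin_PiE[of "\<lambda>_. euclidean" UNIV "\<lambda>i. {- b i..b i}"]
    by (simp add: euclidean_product_topology)
  moreover have "f n \<in> Pi\<^sub>E UNIV (\<lambda>i. {- b i..b i})" for n
    using assms[of n] by (force simp: abs_le_iff)
  ultimately obtain l r where "strict_mono r" "(f \<circ> r) \<longlonglongrightarrow> l"
    by (metis compact_imp_seq_compact seq_compactE)
  moreover have "(\<lambda>n. f (r n) i) \<longlonglongrightarrow> l i" if "(f \<circ> r) \<longlonglongrightarrow> l" for i
    using continuous_on_tendsto_compose[OF continuous_on_product_coordinates that]
    by (simp add: o_def)
  ultimately show ?thesis using that by blast
qed

lemma openin_subtopology_generated_byI:
  assumes local: "\<And>S x. S \<in> \<S> \<Longrightarrow> x \<in> S \<Longrightarrow> x \<in> B \<Longrightarrow> \<exists>W. openin Y W \<and> x \<in> W \<and> W \<inter> B \<subseteq> S"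
    and "openin (subtopology (topology_generated_by \<S>) B) A"
  shows "openin (subtopology Y B) A"
proof -
  obtain S where S: "openin (topology_generated_by \<S>) S" "A = S \<inter> B"
    using assms(2) by (auto simp: openin_subtopology)
  from openin_topology_generated_by[OF S(1)] have "openin (subtopology Y B) (S \<inter> B)"
  proof (induction rule: generate_topology_on.induct)
    case (Int a b)
    have "a \<inter> b \<inter> B = (a \<inter> B) \<inter> (b \<inter> B)" by blast
    thus ?case using Int by (simp add: openin_Int)
  next
    case (UN K)
    have "\<Union>K \<inter> B = (\<Union>k\<in>K. k \<inter> B)" by blast
    moreover have "openin (subtopology Y B) (\<Union>k\<in>K. k \<inter> B)" using UN.IH by (intro openin_Union) auto
    ultimately show ?case by simp
  next
    case (Basis s)
    show ?case unfolding openin_subopen[of _ "s \<inter> B"]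
    proof
      fix x assume "x \<in> s \<inter> B"
      then obtain W where "openin Y W" "x \<in> W" "W \<inter> B \<subseteq> s" using local[OF Basis] by blast
      thus "\<exists>T. openin (subtopology Y B) T \<and> x \<in> T \<and> T \<subseteq> s \<inter> B"
        using \<open>x \<in> s \<inter> B\<close> by (intro exI[of _ "W \<inter> B"]) (auto intro: openin_subtopology_Int)
    qed
  qed simp
  with S(2) show ?thesis by simp
qed

lemma orthogonal_if_norm_minimal:
  fixes a b :: "'a::real_inner"
  assumes min: "\<And>t. norm a \<le> norm (a + t *\<^sub>R b)"
  shows "inner a b = 0"
proof (cases "b = 0")
  case False
  define t where "t = - inner a b / (norm b)\<^sup>2"
  have "(norm a)\<^sup>2 \<le> (norm (a + t *\<^sub>R b))\<^sup>2" using min[of t] by (simp add: power_mono)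
  also have "\<dots> = (norm a)\<^sup>2 + 2 * t * inner a b + t\<^sup>2 * (norm b)\<^sup>2"
    by (simp only: power2_norm_eq_inner)
       (simp add: inner_add_left inner_add_right inner_commute power2_eq_square algebra_simps)
  also have "\<dots> = (norm a)\<^sup>2 - (inner a b)\<^sup>2 / (norm b)\<^sup>2"
    using False by (simp add: t_def power2_eq_square field_simps)
  finally have "(inner a b)\<^sup>2 / (norm b)\<^sup>2 \<le> 0" by simp
  with False show ?thesis by (simp add: divide_le_0_iff)
qed simp

lemma closed_convex_has_min_norm:
  fixes S :: "'a::{real_inner,complete_space} set"
  assumes "closed S" "convex S" "S \<noteq> {}"
  obtains u where "u \<in> S" "\<And>v. v \<in> S \<Longrightarrow> norm u \<le> norm v"
proof -
  define d where "d = Inf ((\<lambda>v. (norm v)\<^sup>2) ` S)"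
  have bdd: "bdd_below ((\<lambda>v. (norm v)\<^sup>2) ` S)" by (rule bdd_belowI[of _ 0]) auto
  have d_le: "d \<le> (norm v)\<^sup>2" if "v \<in> S" for v
    unfolding d_def using bdd that by (simp add: cInf_lower)
  have "\<exists>v\<in>S. (norm v)\<^sup>2 < d + 1 / real (Suc n)" for n
    using cInf_lessD[of "(\<lambda>v. (norm v)\<^sup>2) ` S" "d + 1 / real (Suc n)"] \<open>S \<noteq> {}\<close> by (auto simp: d_def)
  then obtain s where s: "\<And>n. s n \<in> S" "\<And>n. (norm (s n))\<^sup>2 < d + 1 / real (Suc n)" by metis
  have close: "(norm (s m - s n))\<^sup>2 \<le> 2 / real (Suc m) + 2 / real (Suc n)" for m n
  proof -
    \<comment> \<open>the midpoint lies in S, and the parallelogram law does the rest\<close>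
    have "(1/2) *\<^sub>R s m + (1/2) *\<^sub>R s n \<in> S"
      using \<open>convex S\<close> s(1) by (intro convexD) auto
    hence "d \<le> (norm ((1/2) *\<^sub>R (s m + s n)))\<^sup>2" unfolding scaleR_add_right by (rule d_le)
    also have "\<dots> = (norm (s m + s n))\<^sup>2 / 4" by (simp add: power_divide)
    finally have "4 * d \<le> (norm (s m + s n))\<^sup>2" by simp
    moreover have "(norm (s m - s n))\<^sup>2 + (norm (s m + s n))\<^sup>2
        = 2 * (norm (s m))\<^sup>2 + 2 * (norm (s n))\<^sup>2"
      by (simp add: power2_norm_eq_inner inner_diff_left inner_diff_right inner_add_left
          inner_add_right inner_commute)
    ultimately show ?thesis using s(2)[of m] s(2)[of n] by linarith
  qed
  have "(\<lambda>n. 2 / real (Suc n)) \<longlonglongrightarrow> 0"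
    using tendsto_mult_right_zero[OF LIMSEQ_inverse_real_of_nat, of 2] by (simp add: divide_inverse)
  with close have "Cauchy s" by (intro Cauchy_if_dist_sq_le_null) (simp_all add: dist_norm)
  then obtain u where u: "s \<longlonglongrightarrow> u" using Cauchy_convergent_iff convergent_def by blast
  have "(norm u)\<^sup>2 \<le> d"
  proof (rule LIMSEQ_le)
    show "(\<lambda>n. (norm (s n))\<^sup>2) \<longlonglongrightarrow> (norm u)\<^sup>2" by (intro tendsto_intros u)
    show "(\<lambda>n. d + 1 / Suc n) \<longlonglongrightarrow> d"
      using tendsto_add[OF tendsto_const LIMSEQ_inverse_real_of_nat] by (simp add: inverse_eq_divide)
    show "\<exists>N. \<forall>n\<ge>N. (norm (s n))\<^sup>2 \<le> d + 1 / real (Suc n)" using s(2) less_imp_le by blast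
  qed
  moreover have "u \<in> S" using closed_sequentially[OF \<open>closed S\<close>] s(1) u by blast
  ultimately show ?thesis
    using that d_le by (smt (verit) norm_ge_zero power2_le_imp_le)
qed

lemma riesz_representation:
  fixes f :: "'a::{real_inner,complete_space} \<Rightarrow> real"
  assumes "bounded_linear f"
  obtains u where "\<And>v. f v = inner v u"
proof (cases "\<forall>v. f v = 0")
  case False
  interpret f: bounded_linear f by fact
  from False obtain a where "f a \<noteq> 0" by auto
  have "closed {v. f v = 1}" using f.continuous_on[OF continuous_on_id] by (intro closed_Collect_eq) auto
  moreover have "convex {v. f v = 1}"
  proof (rule convexI)
    fix x y :: 'a and s t :: real assume "x \<in> {v. f v = 1}" "y \<in> {v. f v = 1}" "s + t = 1"
    thus "s *\<^sub>R x + t *\<^sub>R y \<in> {v. f v = 1}" by (simp add: f.add f.scale)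
  qed
  moreover have "{v. f v = 1} \<noteq> {}"
    using \<open>f a \<noteq> 0\<close> by (auto intro!: exI[of _ "(1 / f a) *\<^sub>R a"] simp: f.scale)
  ultimately obtain u where "u \<in> {v. f v = 1}" and min: "\<And>v. v \<in> {v. f v = 1} \<Longrightarrow> norm u \<le> norm v"
    by (rule closed_convex_has_min_norm) fast
  hence u: "f u = 1" by simp
  have orth: "inner u w = 0" if "f w = 0" for w
  proof (rule orthogonal_if_norm_minimal)
    show "norm u \<le> norm (u + t *\<^sub>R w)" for t using that u by (intro min) (simp add: f.add f.scale)
  qed
  show ?thesis
  proof (rule that)
    fix v
    have "inner u (v - f v *\<^sub>R u) = 0" by (rule orth) (simp add: f.diff f.scale u)
    hence "inner v u = f v * (norm u)\<^sup>2"
      by (simp add: inner_diff_right power2_norm_eq_inner inner_commute)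
    thus "f v = inner v ((1 / (norm u)\<^sup>2) *\<^sub>R u)" using u by auto
  qed
next
  case True
  show ?thesis by (rule that[of 0]) (simp add: True)
qed

lemma bounded_bilinear_form_representation:
  fixes B :: "'a::{real_inner,complete_space} \<Rightarrow> 'a \<Rightarrow> real"
  assumes "bounded_bilinear B"
  obtains y :: "'a \<Rightarrow>\<^sub>L 'a" where "\<And>u v. inner (y u) v = B u v"
proof -
  interpret B: bounded_bilinear B by fact
  have "\<forall>u. \<exists>w. \<forall>v. B u v = inner v w"
    using riesz_representation[OF B.bounded_linear_right] by metis
  then obtain g where g: "\<And>u v. B u v = inner v (g u)" by metis
  obtain K where K: "\<And>a b. norm (B a b) \<le> norm a * norm b * K" and "K > 0"
    using B.pos_bounded by blast
  have "bounded_linear g"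
  proof
    show "g (a + b) = g a + g b" for a b
      by (subst vector_eq_ldot[symmetric]) (simp add: inner_add_right B.add_left flip: g)
    show "g (c *\<^sub>R a) = c *\<^sub>R g a" for c a
      by (subst vector_eq_ldot[symmetric]) (simp add: B.scaleR_left flip: g)
    show "\<exists>K. \<forall>u. norm (g u) \<le> norm u * K"
    proof (intro exI allI)
      fix u
      have "norm (g u) * norm (g u) = B u (g u)" by (simp add: g norm_eq_sqrt_inner)
      also have "\<dots> \<le> (norm u * K) * norm (g u)" using K[of u "g u"] by (simp add: mult_ac)
      finally have "norm (g u) * norm (g u) \<le> (norm u * K) * norm (g u)" .
      thus "norm (g u) \<le> norm u * K"
        using \<open>K > 0\<close> by (cases "g u = 0") (auto simp: mult_le_cancel_right)
    qed
  qed
  thus ?thesis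
    by (intro that[of "Blinfun g"]) (simp add: bounded_linear_Blinfun_apply g inner_commute)
qed

lemma blinfun_has_adjoint:
  fixes A :: "'a::{real_inner,complete_space} \<Rightarrow>\<^sub>L 'a"
  obtains A' :: "'a \<Rightarrow>\<^sub>L 'a" where "\<And>u v. inner (A u) v = inner u (A' v)"
proof -
  have "bounded_bilinear (\<lambda>v u. inner (A u) v)"
    using bounded_bilinear.flip[OF bounded_bilinear.comp1[OF bounded_bilinear_inner blinfun.bounded_linear_right]] .
  then obtain A' :: "'a \<Rightarrow>\<^sub>L 'a" where A': "\<And>v u. inner (A' v) u = inner (A u) v"
    by (rule bounded_bilinear_form_representation) fast
  show ?thesis by (rule that[of A']) (simp add: A' inner_commute[of _ "A' _"])
qed

lemma inner_blinfun_le: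
  fixes Y :: "'a::real_inner \<Rightarrow>\<^sub>L 'a"
  assumes "norm Y \<le> R"
  shows "\<bar>inner (Y u) v\<bar> \<le> R * norm u * norm v"
proof -
  have "\<bar>inner (Y u) v\<bar> \<le> norm (Y u) * norm v" by (rule Cauchy_Schwarz_ineq2)
  also have "\<dots> \<le> R * norm u * norm v"
  proof (intro mult_right_mono)
    show "norm (Y u) \<le> R * norm u"
      using norm_blinfun[of Y u] mult_right_mono[OF assms norm_ge_zero[of u]] by linarith
  qed simp
  finally show ?thesis .
qed

lemma compact_norm_small_if_inner_small:
  fixes K :: "'a::real_inner set"
  assumes "compact K" "\<epsilon> > 0"
  obtains F \<delta> where "finite F" "\<delta> > 0" "\<And>w. w \<in> K \<Longrightarrow> (\<forall>c\<in>F. inner w c < \<delta>) \<Longrightarrow> norm w < \<epsilon>"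
proof -
  define C where "C = K - ball 0 \<epsilon>"
  define \<delta> where "\<delta> = \<epsilon>\<^sup>2 / 2"
  have "compact C" unfolding C_def using assms(1) by (intro compact_diff) auto
  moreover have "open {w. \<delta> < inner w c}" for c by (intro open_Collect_less continuous_intros)
  moreover have "C \<subseteq> (\<Union>c\<in>C. {w. \<delta> < inner w c})"
  proof
    fix w assume "w \<in> C"
    hence "\<epsilon>\<^sup>2 \<le> inner w w"
      using assms(2) by (auto simp: C_def power2_norm_eq_inner[symmetric] intro!: power_mono)
    moreover have "\<epsilon>\<^sup>2 > 0" using assms(2) by simp
    ultimately have "\<delta> < inner w w" unfolding \<delta>_def by linarith
    thus "w \<in> (\<Union>c\<in>C. {w. \<delta> < inner w c})" using \<open>w \<in> C\<close> by blast
  qed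
  ultimately obtain F where "F \<subseteq> C" "finite F" "C \<subseteq> (\<Union>c\<in>F. {w. \<delta> < inner w c})"
    by (rule compactE_image)
  moreover have "\<delta> > 0" using assms(2) by (simp add: \<delta>_def)
  ultimately show ?thesis by (intro that[of F \<delta>]) (force simp: C_def not_less)+
qed

lemma complex_structure_inner_left:
  assumes "complex_structure J"
  shows "inner (J a) b = - inner a (J b)"
proof -
  have "J (J a) = - a" "inner (J (J a)) (J b) = inner (J a) b"
    using assms unfolding complex_structure_def by blast+
  thus ?thesis by simp
qed

lemma norm_scaleR_add_complex_structure:
  assumes "complex_structure J"
  shows "norm (a *\<^sub>R w + b *\<^sub>R J w) = sqrt (a\<^sup>2 + b\<^sup>2) * norm w"
proof -
  have "inner (J w) (J w) = inner w w" using assms unfolding complex_structure_def by blast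
  moreover have "inner w (J w) = 0"
    using complex_structure_inner_left[OF assms, of w w] by (simp add: inner_commute)
  ultimately have "(norm (a *\<^sub>R w + b *\<^sub>R J w))\<^sup>2 = (a\<^sup>2 + b\<^sup>2) * (norm w)\<^sup>2"
    by (simp only: power2_norm_eq_inner)
       (simp add: inner_add_left inner_add_right inner_commute[of "J w" w] power2_eq_square algebra_simps)
  hence "norm (a *\<^sub>R w + b *\<^sub>R J w) = sqrt ((a\<^sup>2 + b\<^sup>2) * (norm w)\<^sup>2)"
    by (intro real_sqrt_unique[symmetric]) auto
  thus ?thesis by (simp add: real_sqrt_mult)
qed

section \<open>Weak operator convergence\<close>

definition wot_tendsto :: "(nat \<Rightarrow> 'a::real_inner \<Rightarrow>\<^sub>L 'a) \<Rightarrow> ('a \<Rightarrow>\<^sub>L 'a) \<Rightarrow> bool" where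
  "wot_tendsto y z \<longleftrightarrow> (\<forall>u v. (\<lambda>n. inner (y n u) v) \<longlonglongrightarrow> inner (z u) v)"

lemma wot_tendsto_inner_eq:
  assumes "wot_tendsto y z" "\<And>n. inner (y n u) v = inner (y n u') v'"
  shows "inner (z u) v = inner (z u') v'"
proof -
  have "(\<lambda>n. inner (y n u) v) \<longlonglongrightarrow> inner (z u') v'"
    using assms unfolding wot_tendsto_def by presburger
  with assms(1) show ?thesis unfolding wot_tendsto_def using LIMSEQ_unique by blast
qed

lemma wot_limit_exists:
  fixes y :: "nat \<Rightarrow> 'a::{real_inner,complete_space} \<Rightarrow>\<^sub>L 'a"
  assumes bd: "\<And>n. norm (y n) \<le> R" and conv: "\<And>u v. convergent (\<lambda>n. inner (y n u) v)"
  obtains z where "wot_tendsto y z"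
proof -
  define Bf where "Bf u v = lim (\<lambda>n. inner (y n u) v)" for u v
  have lim: "(\<lambda>n. inner (y n u) v) \<longlonglongrightarrow> Bf u v" for u v
    unfolding Bf_def using conv convergent_LIMSEQ_iff by blast
  have "bounded_bilinear Bf"
  proof
    show "Bf (a + b) v = Bf a v + Bf b v" for a b v
      using lim[of "a + b" v] tendsto_add[OF lim[of a v] lim[of b v]]
      by (simp add: blinfun.add_right inner_add_left LIMSEQ_unique)
    show "Bf a (v + w) = Bf a v + Bf a w" for a v w
      using lim[of a "v + w"] tendsto_add[OF lim[of a v] lim[of a w]]
      by (simp add: inner_add_right LIMSEQ_unique)
    show "Bf (c *\<^sub>R a) v = c *\<^sub>R Bf a v" for c a v
      using lim[of "c *\<^sub>R a" v] tendsto_mult[OF tendsto_const[of c] lim[of a v]]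
      by (simp add: blinfun.scaleR_right LIMSEQ_unique)
    show "Bf a (c *\<^sub>R v) = c *\<^sub>R Bf a v" for c a v
      using lim[of a "c *\<^sub>R v"] tendsto_mult[OF tendsto_const[of c] lim[of a v]]
      by (simp add: LIMSEQ_unique)
    have "\<bar>Bf a v\<bar> \<le> R * norm a * norm v" for a v
      using tendsto_rabs[OF lim[of a v]] inner_blinfun_le[OF bd]
      by (intro LIMSEQ_le_const2[of "\<lambda>n. \<bar>inner (y n a) v\<bar>"]) auto
    thus "\<exists>K. \<forall>a v. norm (Bf a v) \<le> norm a * norm v * K" by (auto simp: mult_ac)
  qed
  then obtain z :: "'a \<Rightarrow>\<^sub>L 'a" where "\<And>u v. inner (z u) v = Bf u v"
    by (rule bounded_bilinear_form_representation) fast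
  with lim show ?thesis by (intro that[of z]) (simp add: wot_tendsto_def)
qed

lemma bounded_seq_has_wot_convergent_subseq:
  fixes y :: "nat \<Rightarrow> 'a::{real_inner,complete_space} \<Rightarrow>\<^sub>L 'a"
  assumes "separable_space (euclidean :: 'a topology)" and bd: "\<And>n. norm (y n) \<le> R"
  obtains r z where "strict_mono r" "wot_tendsto (y \<circ> r) z"
proof -
  obtain C :: "'a set" where "countable C" and dense: "closure C = UNIV"
    using assms(1) by (auto simp: separable_space_def)
  hence "C \<noteq> {}" by auto
  define d where "d = from_nat_into C"
  have d: "range d = C" using \<open>C \<noteq> {}\<close> \<open>countable C\<close> by (simp add: d_def)
  obtain r l where r: "strict_mono r"
    and lim: "\<And>ij. (\<lambda>n. inner (y (r n) (d (fst ij))) (d (snd ij))) \<longlonglongrightarrow> l ij"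
    using bounded_seq_has_pointwise_convergent_subseq[of
        "\<lambda>n ij. inner (y n (d (fst ij))) (d (snd ij))" "\<lambda>ij. R * norm (d (fst ij)) * norm (d (snd ij))"]
      inner_blinfun_le[OF bd] by blast
  \<comment> \<open>extend convergence from the dense set, first in the left and then in the right argument\<close>
  have "convergent (\<lambda>n. inner (y (r n) u) (d j))" for u j
  proof (rule convergent_if_convergent_on_dense_equi_lipschitz[OF dense,
        where g = "\<lambda>n u. inner (y (r n) u) (d j)" and K = "R * norm (d j)"])
    show "\<bar>inner (y (r n) u) (d j) - inner (y (r n) u') (d j)\<bar> \<le> R * norm (d j) * dist u u'" for n u u'
      using inner_blinfun_le[OF bd, of "r n" "u - u'" "d j"]
      by (simp add: dist_norm blinfun.diff_right inner_diff_left mult_ac)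
    show "convergent (\<lambda>n. inner (y (r n) u) (d j))" if "u \<in> C" for u
    proof -
      obtain i where "u = d i" using \<open>u \<in> C\<close> d by blast
      thus ?thesis using lim[of "(i, j)"] by (auto simp: convergent_def)
    qed
  qed
  note conv_dense = this
  have "convergent (\<lambda>n. inner (y (r n) u) v)" for u v
  proof (rule convergent_if_convergent_on_dense_equi_lipschitz[OF dense,
        where g = "\<lambda>n v. inner (y (r n) u) v" and K = "R * norm u"])
    show "\<bar>inner (y (r n) u) v - inner (y (r n) u) v'\<bar> \<le> R * norm u * dist v v'" for n v v'
      using inner_blinfun_le[OF bd, of "r n" u "v - v'"] by (simp add: dist_norm inner_diff_right)
    show "convergent (\<lambda>n. inner (y (r n) u) v)" if "v \<in> C" for v
      using \<open>v \<in> C\<close> d conv_dense by blast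
  qed
  then obtain z where "wot_tendsto (y \<circ> r) z"
    using wot_limit_exists[of "y \<circ> r" R] bd by (auto simp: o_def)
  with r show ?thesis by (rule that)
qed

section \<open>Von Neumann algebras are weak-operator closed\<close>

lemma blinfun_compose_commute_iff: "a o\<^sub>L b = b o\<^sub>L a \<longleftrightarrow> (\<forall>v. a (b v) = b (a v))"
  by (metis blinfun_apply_blinfun_compose blinfun_eqI)

lemma commutant_diff: "x \<in> commutant J S \<Longrightarrow> y \<in> commutant J S \<Longrightarrow> x - y \<in> commutant J S"
  unfolding commutant_def bounded_op_def blinfun_compose_commute_iff
  by (simp add: blinfun.diff_left blinfun.diff_right)

lemma commutant_scaleR: "x \<in> commutant J S \<Longrightarrow> c *\<^sub>R x \<in> commutant J S"
  unfolding commutant_def bounded_op_def blinfun_compose_commute_iff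
  by (simp add: blinfun.scaleR_left blinfun.scaleR_right)

lemma von_neumann_algebra_diff: "von_neumann_algebra J M \<Longrightarrow> x \<in> M \<Longrightarrow> y \<in> M \<Longrightarrow> x - y \<in> M"
  unfolding von_neumann_algebra_def by (metis commutant_diff)

lemma von_neumann_algebra_scaleR: "von_neumann_algebra J M \<Longrightarrow> x \<in> M \<Longrightarrow> c *\<^sub>R x \<in> M"
  unfolding von_neumann_algebra_def by (metis commutant_scaleR)

lemma von_neumann_algebra_wot_closed:
  assumes cs: "complex_structure J" and vN: "von_neumann_algebra J M"
    and yM: "\<And>n. y n \<in> M" and lim: "wot_tendsto y z"
  shows "z \<in> M"
proof -
  \<comment> \<open>z inherits every commutation relation y n \<circ> a = a \<circ> y n in which a has an adjoint a'\<close>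
  have commute: "a (z u) = z (a u)"
    if a': "\<And>u v. inner (a u) v = inner u (a' v)" and comm: "\<And>n u. a (y n u) = y n (a u)" for a a' u
  proof (rule vector_eq_rdot[THEN iffD1, rule_format])
    fix w
    have "inner (z u) (a' w) = inner (z (a u)) w"
      by (rule wot_tendsto_inner_eq[OF lim]) (simp add: comm flip: a')
    thus "inner (a (z u)) w = inner (z (a u)) w" by (simp add: a')
  qed
  have Mb: "bounded_op J x" if "x \<in> M" for x
    using vN that unfolding von_neumann_algebra_def by auto
  have "J (z u) = z (J u)" for u
  proof (rule commute[where a' = "- J"])
    show "inner (J u) v = inner u ((- J) v)" for u v
      by (simp add: complex_structure_inner_left[OF cs] uminus_blinfun.rep_eq)
    show "J (y n u) = y n (J u)" for n u
      using Mb[OF yM[of n]] unfolding bounded_op_def blinfun_compose_commute_iff by blast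
  qed
  moreover have "x (z u) = z (x u)" if "x \<in> commutant J M" for x u
  proof -
    obtain x' :: "_ \<Rightarrow>\<^sub>L _" where "\<And>u v. inner (x u) v = inner u (x' v)"
      by (rule blinfun_has_adjoint[of x]) fast
    moreover have "x (y n u) = y n (x u)" for n u
      using that yM[of n] unfolding commutant_def blinfun_compose_commute_iff by auto
    ultimately show ?thesis by (rule commute)
  qed
  ultimately have "z \<in> commutant J (commutant J M)"
    unfolding commutant_def[of J "commutant J M"] bounded_op_def blinfun_compose_commute_iff by auto
  thus ?thesis using vN by (simp add: von_neumann_algebra_def)
qed

section \<open>The sigma-weak topology\<close>

lemma normal_functional_inner: "normal_functional J (\<lambda>x. inner (x a) b)"
proof -
  define \<xi> where "\<xi> k = (if k = 0 then a else 0)" for k :: nat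
  define \<eta> where "\<eta> k = (if k = 0 then b else 0)" for k :: nat
  have single: "(\<lambda>k::nat. if k = 0 then c else 0) sums c" for c :: real
    using sums_single[of 0 "\<lambda>_. c"] by simp
  have "(\<lambda>k. (norm (\<xi> k))\<^sup>2) = (\<lambda>k. if k = 0 then (norm a)\<^sup>2 else 0)"
    by (rule ext) (simp add: \<xi>_def)
  hence "summable (\<lambda>k. (norm (\<xi> k))\<^sup>2)" using sums_summable[OF single] by simp
  moreover have "(\<lambda>k. (norm (\<eta> k))\<^sup>2) = (\<lambda>k. if k = 0 then (norm b)\<^sup>2 else 0)"
    by (rule ext) (simp add: \<eta>_def)
  hence "summable (\<lambda>k. (norm (\<eta> k))\<^sup>2)" using sums_summable[OF single] by simp
  moreover have "(\<lambda>k. inner (x (\<xi> k)) (\<eta> k)) = (\<lambda>k. if k = 0 then inner (x a) b else 0)" for x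
    by (rule ext) (simp add: \<xi>_def \<eta>_def)
  hence "inner (x a) b = (\<Sum>k. inner (x (\<xi> k)) (\<eta> k))" for x using sums_unique[OF single] by simp
  ultimately show ?thesis unfolding normal_functional_def by blast
qed

lemma normal_functional_tendsto:
  assumes "normal_functional J \<phi>" and bd: "\<And>n. norm (y n) \<le> R" and lim: "wot_tendsto y z"
  shows "(\<lambda>n. \<phi> (y n)) \<longlonglongrightarrow> \<phi> z"
proof -
  obtain \<xi> \<eta> where s: "summable (\<lambda>k. (norm (\<xi> k))\<^sup>2)" "summable (\<lambda>k. (norm (\<eta> k))\<^sup>2)"
    and \<phi>: "\<phi> = (\<lambda>x. \<Sum>k. inner (x (\<xi> k)) (\<eta> k))"
    using assms(1) unfolding normal_functional_def by blast
  have "R \<ge> 0" using bd[of 0] norm_ge_zero order_trans by blast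
  have "(\<lambda>n. \<Sum>k. inner (y n (\<xi> k)) (\<eta> k)) \<longlonglongrightarrow> (\<Sum>k. inner (z (\<xi> k)) (\<eta> k))"
  proof (rule tannerys_theorem[where M = "\<lambda>k. R * ((norm (\<xi> k))\<^sup>2 + (norm (\<eta> k))\<^sup>2)",
        THEN conjunct2, THEN conjunct2])
    show "(\<lambda>n. inner (y n (\<xi> k)) (\<eta> k)) \<longlonglongrightarrow> inner (z (\<xi> k)) (\<eta> k)" for k
      using lim by (simp add: wot_tendsto_def)
    have "norm (inner (y n (\<xi> k)) (\<eta> k)) \<le> R * ((norm (\<xi> k))\<^sup>2 + (norm (\<eta> k))\<^sup>2)" for k n
    proof -
      have "norm (\<xi> k) * norm (\<eta> k) \<le> (norm (\<xi> k))\<^sup>2 + (norm (\<eta> k))\<^sup>2"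
        using sum_squares_bound[of "norm (\<xi> k)" "norm (\<eta> k)"]
          mult_nonneg_nonneg[OF norm_ge_zero norm_ge_zero, of "\<xi> k" "\<eta> k"] by linarith
      thus ?thesis
        using inner_blinfun_le[OF bd, of n "\<xi> k" "\<eta> k"] mult_left_mono[OF _ \<open>R \<ge> 0\<close>]
        by (simp add: mult.assoc) (meson order_trans)
    qed
    thus "eventually (\<lambda>(k, n). norm (inner (y n (\<xi> k)) (\<eta> k))
        \<le> R * ((norm (\<xi> k))\<^sup>2 + (norm (\<eta> k))\<^sup>2)) (at_top \<times>\<^sub>F sequentially)"
      by (intro always_eventually) auto
    show "summable (\<lambda>k. R * ((norm (\<xi> k))\<^sup>2 + (norm (\<eta> k))\<^sup>2))"
      using s by (intro summable_mult summable_add)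
  qed simp
  thus ?thesis unfolding \<phi> .
qed

lemma openin_sigma_weak_topology:
  "normal_functional J \<phi> \<Longrightarrow> open U \<Longrightarrow> openin (sigma_weak_topology J) {x. \<phi> x \<in> U}"
  unfolding sigma_weak_topology_def by (rule topology_generated_by_Basis) blast

lemma topspace_sigma_weak_topology: "topspace (sigma_weak_topology J) = UNIV"
  using openin_subset[OF openin_sigma_weak_topology[OF normal_functional_inner open_UNIV]]
  by auto

section \<open>Comparison of the two topologies on bounded sets\<close>

lemma sigma_weak_neighbourhood_L_small:
  fixes M :: "('a::{real_inner,complete_space} \<Rightarrow>\<^sub>L 'a) set" and T :: "'a \<Rightarrow>\<^sub>L 'a"
  assumes vN: "von_neumann_algebra J M"
    and cpt: "compact (closure {T (blinfun_apply x \<Omega>) | x. x \<in> M \<and> norm x \<le> 1})"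
    and B: "B \<subseteq> M" "bounded B" and "x0 \<in> B" and "\<epsilon> > 0"
  obtains W where "openin (sigma_weak_topology J) W" "x0 \<in> W"
    "\<And>y. y \<in> W \<inter> B \<Longrightarrow> norm (T ((y - x0) \<Omega>)) < \<epsilon>"
proof -
  obtain R where "R > 0" and R: "\<And>y. y \<in> B \<Longrightarrow> norm y \<le> R" using B(2) unfolding bounded_pos by blast
  define K where "K = (\<lambda>w. (2 * R) *\<^sub>R w) ` closure {T (blinfun_apply x \<Omega>) | x. x \<in> M \<and> norm x \<le> 1}"
  have "compact K" unfolding K_def using cpt by (rule compact_scaling)
  have in_K: "T ((y - x0) \<Omega>) \<in> K" if "y \<in> B" for y
  proof -
    define x where "x = (1 / (2 * R)) *\<^sub>R (y - x0)"
    have "x \<in> M"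
      unfolding x_def using vN B(1) \<open>y \<in> B\<close> \<open>x0 \<in> B\<close>
      by (intro von_neumann_algebra_scaleR von_neumann_algebra_diff) auto
    moreover have "norm x \<le> 1"
      using R[OF \<open>y \<in> B\<close>] R[OF \<open>x0 \<in> B\<close>] norm_triangle_ineq4[of y x0] \<open>R > 0\<close>
      by (simp add: x_def divide_le_eq)
    ultimately have "T (x \<Omega>) \<in> closure {T (blinfun_apply x \<Omega>) | x. x \<in> M \<and> norm x \<le> 1}"
      by (intro closure_subset[THEN subsetD]) auto
    moreover have "T ((y - x0) \<Omega>) = (2 * R) *\<^sub>R T (x \<Omega>)"
      unfolding x_def using \<open>R > 0\<close> by (simp add: blinfun.scaleR_left blinfun.scaleR_right)
    ultimately show ?thesis unfolding K_def by blast
  qed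
  obtain F \<delta> where "finite F" "\<delta> > 0"
    and small: "\<And>w. w \<in> K \<Longrightarrow> \<forall>c\<in>F. inner w c < \<delta> \<Longrightarrow> norm w < \<epsilon>"
    using compact_norm_small_if_inner_small[OF \<open>compact K\<close> \<open>\<epsilon> > 0\<close>] by blast
  obtain T' :: "'a \<Rightarrow>\<^sub>L 'a" where T': "\<And>u v. inner (T u) v = inner u (T' v)"
    by (rule blinfun_has_adjoint[of T]) fast
  define V where "V c = {y. inner (blinfun_apply y \<Omega>) (T' c) \<in> {..< inner (x0 \<Omega>) (T' c) + \<delta>}}" for c
  define W where "W = \<Inter> (insert UNIV (V ` F))"
  have "openin (sigma_weak_topology J) (V c)" for c
    unfolding V_def by (intro openin_sigma_weak_topology normal_functional_inner open_lessThan)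
  moreover have "openin (sigma_weak_topology J) UNIV"
    using openin_topspace[of "sigma_weak_topology J"] by (simp add: topspace_sigma_weak_topology)
  ultimately have "openin (sigma_weak_topology J) W"
    unfolding W_def using \<open>finite F\<close> by (intro openin_Inter) auto
  moreover have "x0 \<in> W" using \<open>\<delta> > 0\<close> by (simp add: W_def V_def)
  moreover have "norm (T ((y - x0) \<Omega>)) < \<epsilon>" if "y \<in> W \<inter> B" for y
  proof (rule small)
    show "T ((y - x0) \<Omega>) \<in> K" using that by (intro in_K) auto
    show "\<forall>c\<in>F. inner (T ((y - x0) \<Omega>)) c < \<delta>"
      using that by (auto simp: W_def V_def T' blinfun.diff_left inner_diff_left)
  qed
  ultimately show ?thesis by (rule that)
qed

lemma wot_limit_eq_if_T_tendsto:
  fixes M :: "('a::{real_inner,complete_space} \<Rightarrow>\<^sub>L 'a) set" and T :: "'a \<Rightarrow>\<^sub>L 'a"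
  assumes vN: "von_neumann_algebra J M" and "separating_vector M \<Omega>"
    and ker: "\<forall>v. T v = 0 \<longrightarrow> v = 0"
    and "z \<in> M" "x0 \<in> M" and lim: "wot_tendsto y z" and T_lim: "(\<lambda>n. T (y n \<Omega>)) \<longlonglongrightarrow> T (x0 \<Omega>)"
  shows "z = x0"
proof -
  obtain T' :: "'a \<Rightarrow>\<^sub>L 'a" where T': "\<And>u v. inner (T u) v = inner u (T' v)"
    by (rule blinfun_has_adjoint[of T]) fast
  \<comment> \<open>the weak limit of T (y n \<Omega>) is T (z \<Omega>), and its norm limit is T (x0 \<Omega>)\<close>
  have "inner (T (z \<Omega>)) v = inner (T (x0 \<Omega>)) v" for v
  proof (rule LIMSEQ_unique)
    show "(\<lambda>n. inner (T (y n \<Omega>)) v) \<longlonglongrightarrow> inner (T (z \<Omega>)) v"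
      using lim by (simp add: T' wot_tendsto_def)
    show "(\<lambda>n. inner (T (y n \<Omega>)) v) \<longlonglongrightarrow> inner (T (x0 \<Omega>)) v" by (intro tendsto_intros T_lim)
  qed
  hence "T ((z - x0) \<Omega>) = 0"
    using vector_eq_rdot by (auto simp: blinfun.diff_left blinfun.diff_right)
  hence "(z - x0) \<Omega> = 0" using ker by blast
  moreover have "z - x0 \<in> M" using von_neumann_algebra_diff[OF vN \<open>z \<in> M\<close> \<open>x0 \<in> M\<close>] .
  ultimately show ?thesis using assms(2) unfolding separating_vector_def by auto
qed

lemma L_small_in_sigma_weak_neighbourhood:
  fixes M :: "('a::{real_inner,complete_space} \<Rightarrow>\<^sub>L 'a) set" and T :: "'a \<Rightarrow>\<^sub>L 'a"
  assumes cs: "complex_structure J" and sep: "separable_space (euclidean :: 'a topology)"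
    and vN: "von_neumann_algebra J M" and sv: "separating_vector M \<Omega>"
    and ker: "\<forall>v. T v = 0 \<longrightarrow> v = 0"
    and B: "B \<subseteq> M" "bounded B" and "x0 \<in> B"
    and \<phi>: "normal_functional J \<phi>" and "open U" "\<phi> x0 \<in> U"
  obtains \<epsilon> where "\<epsilon> > 0" "\<And>y. y \<in> B \<Longrightarrow> norm (T ((y - x0) \<Omega>)) < \<epsilon> \<Longrightarrow> \<phi> y \<in> U"
proof (rule ccontr)
  assume "\<not> thesis"
  hence "\<forall>n. \<exists>y. y \<in> B \<and> norm (T (blinfun_apply (y - x0) \<Omega>)) < 1 / real (Suc n) \<and> \<phi> y \<notin> U"
    using that by (metis of_nat_0_less_iff zero_less_Suc zero_less_divide_1_iff)
  then obtain y where yB: "\<And>n. y n \<in> B" and y_close: "\<And>n. norm (T ((y n - x0) \<Omega>)) < 1 / real (Suc n)"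
    and y_out: "\<And>n. \<phi> (y n) \<notin> U"
    by metis
  obtain R where R: "\<And>x. x \<in> B \<Longrightarrow> norm x \<le> R" using B(2) unfolding bounded_iff by blast
  obtain r z where "strict_mono r" and lim: "wot_tendsto (y \<circ> r) z"
    using bounded_seq_has_wot_convergent_subseq[OF sep, of y R] R yB by blast
  have "z \<in> M" using von_neumann_algebra_wot_closed[OF cs vN _ lim] yB B(1) by auto
  have "(\<lambda>n. T (y (r n) \<Omega>) - T (x0 \<Omega>)) \<longlonglongrightarrow> 0"
  proof (rule Lim_null_comparison)
    show "\<forall>\<^sub>F n in sequentially. norm (T (y (r n) \<Omega>) - T (x0 \<Omega>)) \<le> 1 / real (Suc n)"
    proof (intro always_eventually allI)
      fix n
      have "norm (T (y (r n) \<Omega>) - T (x0 \<Omega>)) < 1 / real (Suc (r n))"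
        using y_close[of "r n"] by (simp add: blinfun.diff_left blinfun.diff_right)
      also have "\<dots> \<le> 1 / real (Suc n)" using seq_suble[OF \<open>strict_mono r\<close>, of n] by (simp add: frac_le)
      finally show "norm (T (y (r n) \<Omega>) - T (x0 \<Omega>)) \<le> 1 / real (Suc n)" by simp
    qed
    show "(\<lambda>n. 1 / real (Suc n)) \<longlonglongrightarrow> 0"
      using LIMSEQ_inverse_real_of_nat by (simp add: inverse_eq_divide)
  qed
  hence "z = x0"
    using wot_limit_eq_if_T_tendsto[OF vN sv ker \<open>z \<in> M\<close> _ lim] B(1) \<open>x0 \<in> B\<close>
    by (auto simp: LIM_zero_iff)
  hence "(\<lambda>n. \<phi> (y (r n))) \<longlonglongrightarrow> \<phi> x0"
    using normal_functional_tendsto[OF \<phi> _ lim, of R] R yB by auto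
  hence "\<forall>\<^sub>F n in sequentially. \<phi> (y (r n)) \<in> U"
    using \<open>open U\<close> \<open>\<phi> x0 \<in> U\<close> by (rule topological_tendstoD)
  thus False using y_out by (auto simp: eventually_sequentially)
qed

lemma openin_sigma_weak_if_openin_L_topology:
  fixes M :: "('a::{real_inner,complete_space} \<Rightarrow>\<^sub>L 'a) set" and T :: "'a \<Rightarrow>\<^sub>L 'a"
  assumes vN: "von_neumann_algebra J M"
    and cpt: "compact (closure {T (blinfun_apply x \<Omega>) | x. x \<in> M \<and> norm x \<le> 1})"
    and B: "B \<subseteq> M" "bounded B"
    and "openin (subtopology (L_topology M (\<lambda>x. norm (T (x \<Omega>)))) B) A"
  shows "openin (subtopology (sigma_weak_topology J) B) A"
  using assms(5) unfolding L_topology_def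
proof (rule openin_subtopology_generated_byI[rotated])
  fix S x0 assume "S \<in> {{y. norm (T (blinfun_apply (y - x) \<Omega>)) < r} | x r. x \<in> M}" "x0 \<in> S" "x0 \<in> B"
  then obtain x r where S: "S = {y. norm (T (blinfun_apply (y - x) \<Omega>)) < r}" and "x0 \<in> B"
    and "norm (T ((x0 - x) \<Omega>)) < r" by auto
  then obtain W where "openin (sigma_weak_topology J) W" "x0 \<in> W"
    and small: "\<And>y. y \<in> W \<inter> B \<Longrightarrow> norm (T ((y - x0) \<Omega>)) < r - norm (T ((x0 - x) \<Omega>))"
    using sigma_weak_neighbourhood_L_small[OF vN cpt B] by (metis diff_gt_0_iff_gt)
  moreover have "W \<inter> B \<subseteq> S"
  proof
    fix y assume "y \<in> W \<inter> B"
    have "T ((y - x) \<Omega>) = T ((y - x0) \<Omega>) + T ((x0 - x) \<Omega>)"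
      by (simp add: blinfun.diff_left blinfun.diff_right)
    hence "norm (T ((y - x) \<Omega>)) \<le> norm (T ((y - x0) \<Omega>)) + norm (T ((x0 - x) \<Omega>))"
      by (simp add: norm_triangle_ineq)
    thus "y \<in> S" using small[OF \<open>y \<in> W \<inter> B\<close>] S by simp
  qed
  ultimately show "\<exists>W. openin (sigma_weak_topology J) W \<and> x0 \<in> W \<and> W \<inter> B \<subseteq> S" by blast
qed

lemma openin_L_topology_if_openin_sigma_weak:
  fixes M :: "('a::{real_inner,complete_space} \<Rightarrow>\<^sub>L 'a) set" and T :: "'a \<Rightarrow>\<^sub>L 'a"
  assumes cs: "complex_structure J" and sep: "separable_space (euclidean :: 'a topology)"
    and vN: "von_neumann_algebra J M" and sv: "separating_vector M \<Omega>"
    and ker: "\<forall>v. T v = 0 \<longrightarrow> v = 0"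
    and B: "B \<subseteq> M" "bounded B"
    and "openin (subtopology (sigma_weak_topology J) B) A"
  shows "openin (subtopology (L_topology M (\<lambda>x. norm (T (x \<Omega>)))) B) A"
  using assms(8) unfolding sigma_weak_topology_def
proof (rule openin_subtopology_generated_byI[rotated])
  fix S x0 assume "S \<in> {{x. \<phi> x \<in> U} | \<phi> U. normal_functional J \<phi> \<and> open U}" "x0 \<in> S" "x0 \<in> B"
  then obtain \<phi> U where S: "S = {x. \<phi> x \<in> U}" and \<phi>: "normal_functional J \<phi>" "open U" "\<phi> x0 \<in> U"
    by auto
  obtain \<epsilon> where "\<epsilon> > 0" and close: "\<And>y. y \<in> B \<Longrightarrow> norm (T ((y - x0) \<Omega>)) < \<epsilon> \<Longrightarrow> \<phi> y \<in> U"
    using L_small_in_sigma_weak_neighbourhood[OF cs sep vN sv ker B \<open>x0 \<in> B\<close> \<phi>] by blast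
  define W where "W = {y. norm (T (blinfun_apply (y - x0) \<Omega>)) < \<epsilon>}"
  have "openin (L_topology M (\<lambda>x. norm (T (x \<Omega>)))) W"
    unfolding L_topology_def W_def using \<open>x0 \<in> B\<close> B(1) by (intro topology_generated_by_Basis) blast
  moreover have "x0 \<in> W" using \<open>\<epsilon> > 0\<close> by (simp add: W_def)
  moreover have "W \<inter> B \<subseteq> S" using close by (auto simp: W_def S)
  ultimately show "\<exists>W. openin (L_topology M (\<lambda>x. norm (T (x \<Omega>)))) W \<and> x0 \<in> W \<and> W \<inter> B \<subseteq> S"
    by blast
qed

theorem mainTheorem12:
  fixes J :: "'h::{real_inner,complete_space} \<Rightarrow>\<^sub>L 'h"
    and M :: "('h \<Rightarrow>\<^sub>L 'h) set" and \<Omega> :: 'h and T :: "'h \<Rightarrow>\<^sub>L 'h"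
  assumes "complex_structure J"
    and "separable_space (euclidean :: 'h topology)"
    and "von_neumann_algebra J M"
    and "separating_vector M \<Omega>"
    and "bounded_op J T"
    and "\<forall>v. T v = 0 \<longrightarrow> v = 0"
    and "compact (closure {T (blinfun_apply x \<Omega>) | x. x \<in> M \<and> norm x \<le> 1})"
  shows "dual_Lip_norm J M (\<lambda>x. norm (T (blinfun_apply x \<Omega>)))"
proof -
  have "norm (T (cscale_op J c x \<Omega>)) = cmod c * norm (T (x \<Omega>))" for c x
  proof -
    have "J (T v) = T (J v)" for v
      using assms(5) unfolding bounded_op_def blinfun_compose_commute_iff by blast
    hence "T (cscale_op J c x \<Omega>) = Re c *\<^sub>R T (x \<Omega>) + Im c *\<^sub>R J (T (x \<Omega>))"
      by (simp add: cscale_op_def blinfun.add_left blinfun.scaleR_left blinfun.add_right blinfun.scaleR_right)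
    thus ?thesis by (simp add: norm_scaleR_add_complex_structure[OF assms(1)] norm_complex_def)
  qed
  moreover have "x = 0" if "x \<in> M" "norm (T (x \<Omega>)) = 0" for x
    using that assms(4,6) unfolding separating_vector_def by auto
  moreover have "subtopology (L_topology M (\<lambda>x. norm (T (x \<Omega>)))) B = subtopology (sigma_weak_topology J) B"
    if "B \<subseteq> M" "bounded B" for B
    unfolding topology_eq using that
    by (metis openin_sigma_weak_if_openin_L_topology[OF assms(3,7)]
        openin_L_topology_if_openin_sigma_weak[OF assms(1-4,6)])
  ultimately show ?thesis
    unfolding dual_Lip_norm_def by (simp add: blinfun.add_left blinfun.add_right norm_triangle_ineq)
qed

end
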